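(* Consider the disclosure model described in the context. Any full-disclosure policy $d$ is Pareto efficient and satisfies $\Pi(d)\ge\Pi(d')$ for every $d'\in\mathcal{D}$.
   Context: Emissions lie in $E=[0,\bar e]$ with $\bar e>0$. The firm's type $\theta\in\Theta=[\underline\theta,\bar\theta]$ is private information with a continuous density $f=F'$ on $\Theta$. The firm's profit is $\tilde\pi(\theta,e,\tilde e)$ with actual emission $e$ and market-perceived emission $\tilde e$; it is strictly increasing in $e$ and strictly decreasing in $\tilde e$. Standing assumptions: $\tilde\pi$ is continuous on $\Theta\times E\times E$ and $C^2$ on its interior; $\pi(\theta,e):=\tilde\pi(\theta,e,e)$ is strictly concave in $e$; and $\pi(\theta,0)<\pi(\theta,\bar e)$ for all $\theta$. A disclosure policy is a function $d:E\to E$ (a partition of $E$ into level sets). An emission $e$ is belief-compatible under $d$ if $e\ge e'$ whenever $d(e')=d(e)$; $\tilde E_d$ is the set of such levels. The type-$\theta$ firm chooses $e\in\tilde E_d$ maximizing $\pi(\theta,e)$. $\mathcal{D}$ is the set of policies for which the maximum is attained for every type. For $d\in\mathcal{D}$, $\pi_d(\theta)=\max_{e\in\tilde E_d}\pi(\theta,e)$, and $\gamma_d(\theta)$ is the lowest maximizer. Further, $\Pi(d)=\int_\Theta\pi_d\,dF$ and $\Gamma(d)=\int_\Theta\gamma_d\,dF$. A policy $d\in\mathcal{D}$ is Pareto efficient if there is no $d'\in\mathcal{D}$ with $\Pi(d')\ge\Pi(d)$ and $\Gamma(d')\le\Gamma(d)$, at least one inequality strict. Let $\hat{\mathbf e}(\theta):=\arg\max_{e\in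 E}\pi(\theta,e)$. A full-disclosure policy is a policy $d$ such that, for every $e\in\hat{\mathbf e}(\Theta)$, $e$ is alone in its cell: $d(e')=d(e)$ implies $e'=e$. Such a policy belongs to $\mathcal{D}$. *)

theory Defs
  imports "HOL-Analysis.Analysis"
begin

definition strictly_concave_on :: "real set \<Rightarrow> (real \<Rightarrow> real) \<Rightarrow> bool" where
  "strictly_concave_on S g \<longleftrightarrow> convex S \<and>
     (\<forall>x\<in>S. \<forall>y\<in>S. \<forall>t. x \<noteq> y \<and> 0 < t \<and> t < 1 \<longrightarrow>
        g ((1 - t) * x + t * y) > (1 - t) * g x + t * g y)"

definition C2_on :: "('a::real_normed_vector \<Rightarrow> real) \<Rightarrow> 'a set \<Rightarrow> bool" where
  "C2_on g S \<longleftrightarrow> (\<exists>(D :: 'a \<Rightarrow> 'a \<Rightarrow>\<^sub>L real) (D2 :: 'a \<Rightarrow> 'a \<Rightarrow>\<^sub>L ('a \<Rightarrow>\<^sub>L real)).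
      (\<forall>x\<in>S. (g has_derivative blinfun_apply (D x)) (at x)) \<and>
      (\<forall>x\<in>S. (D has_derivative blinfun_apply (D2 x)) (at x)) \<and>
      continuous_on S D2)"

(* Standing assumptions of the model.  pt = tilde-pi (type, actual emission, perceived emission),
   E = [0, eb], Theta = [tlo, thi], f = density of F on Theta. *)
definition model_assms ::
  "(real \<Rightarrow> real \<Rightarrow> real \<Rightarrow> real) \<Rightarrow> real \<Rightarrow> real \<Rightarrow> real \<Rightarrow> (real \<Rightarrow> real) \<Rightarrow> bool" where
  "model_assms pt eb tlo thi f \<longleftrightarrow>
     0 < eb \<and> tlo < thi \<and>
     (\<forall>\<theta>\<in>{tlo..thi}. 0 \<le> f \<theta>) \<and> continuous_on {tlo..thi} f \<and> (f has_integral 1) {tlo..thi} \<and>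
     continuous_on ({tlo..thi} \<times> {0..eb} \<times> {0..eb}) (\<lambda>(\<theta>, e, et). pt \<theta> e et) \<and>
     C2_on (\<lambda>(\<theta>, e, et). pt \<theta> e et) (interior ({tlo..thi} \<times> {0..eb} \<times> {0..eb})) \<and>
     (\<forall>\<theta>\<in>{tlo..thi}. \<forall>et\<in>{0..eb}. \<forall>e1\<in>{0..eb}. \<forall>e2\<in>{0..eb}.
        e1 < e2 \<longrightarrow> pt \<theta> e1 et < pt \<theta> e2 et) \<and>
     (\<forall>\<theta>\<in>{tlo..thi}. \<forall>e\<in>{0..eb}. \<forall>e1\<in>{0..eb}. \<forall>e2\<in>{0..eb}.
        e1 < e2 \<longrightarrow> pt \<theta> e e2 < pt \<theta> e e1) \<and>
     (\<forall>\<theta>\<in>{tlo..thi}. strictly_concave_on {0..eb} (\<lambda>e. pt \<theta> e e)) \<and>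
     (\<forall>\<theta>\<in>{tlo..thi}. pt \<theta> 0 0 < pt \<theta> eb eb)"

definition red_profit :: "(real \<Rightarrow> real \<Rightarrow> real \<Rightarrow> real) \<Rightarrow> real \<Rightarrow> real \<Rightarrow> real" where
  "red_profit pt \<theta> e = pt \<theta> e e"

definition belief_compatible :: "real \<Rightarrow> (real \<Rightarrow> real) \<Rightarrow> real set" where
  "belief_compatible eb d = {e \<in> {0..eb}. \<forall>e'\<in>{0..eb}. d e' = d e \<longrightarrow> e' \<le> e}"

definition policies ::
  "(real \<Rightarrow> real \<Rightarrow> real \<Rightarrow> real) \<Rightarrow> real \<Rightarrow> real \<Rightarrow> real \<Rightarrow> (real \<Rightarrow> real) set" where
  "policies pt eb tlo thi = {d. (\<forall>e\<in>{0..eb}. d e \<in> {0..eb}) \<and>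
      (\<forall>\<theta>\<in>{tlo..thi}. \<exists>e\<in>belief_compatible eb d.
          \<forall>e'\<in>belief_compatible eb d. red_profit pt \<theta> e' \<le> red_profit pt \<theta> e)}"

definition pi_d :: "(real \<Rightarrow> real \<Rightarrow> real \<Rightarrow> real) \<Rightarrow> real \<Rightarrow> (real \<Rightarrow> real) \<Rightarrow> real \<Rightarrow> real" where
  "pi_d pt eb d \<theta> = (SUP e\<in>belief_compatible eb d. red_profit pt \<theta> e)"

definition gamma_d :: "(real \<Rightarrow> real \<Rightarrow> real \<Rightarrow> real) \<Rightarrow> real \<Rightarrow> (real \<Rightarrow> real) \<Rightarrow> real \<Rightarrow> real" where
  "gamma_d pt eb d \<theta> = (LEAST e. e \<in> belief_compatible eb d \<and>
      (\<forall>e'\<in>belief_compatible eb d. red_profit pt \<theta> e' \<le> red_profit pt \<theta> e))"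

definition Pi_val ::
  "(real \<Rightarrow> real \<Rightarrow> real \<Rightarrow> real) \<Rightarrow> real \<Rightarrow> real \<Rightarrow> real \<Rightarrow> (real \<Rightarrow> real) \<Rightarrow> (real \<Rightarrow> real) \<Rightarrow> real" where
  "Pi_val pt eb tlo thi f d = integral {tlo..thi} (\<lambda>\<theta>. pi_d pt eb d \<theta> * f \<theta>)"

definition Gamma_val ::
  "(real \<Rightarrow> real \<Rightarrow> real \<Rightarrow> real) \<Rightarrow> real \<Rightarrow> real \<Rightarrow> real \<Rightarrow> (real \<Rightarrow> real) \<Rightarrow> (real \<Rightarrow> real) \<Rightarrow> real" where
  "Gamma_val pt eb tlo thi f d = integral {tlo..thi} (\<lambda>\<theta>. gamma_d pt eb d \<theta> * f \<theta>)"

definition pareto_efficient ::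
  "(real \<Rightarrow> real \<Rightarrow> real \<Rightarrow> real) \<Rightarrow> real \<Rightarrow> real \<Rightarrow> real \<Rightarrow> (real \<Rightarrow> real) \<Rightarrow> (real \<Rightarrow> real) \<Rightarrow> bool" where
  "pareto_efficient pt eb tlo thi f d \<longleftrightarrow> d \<in> policies pt eb tlo thi \<and>
     \<not> (\<exists>d'\<in>policies pt eb tlo thi.
          Pi_val pt eb tlo thi f d' \<ge> Pi_val pt eb tlo thi f d \<and>
          Gamma_val pt eb tlo thi f d' \<le> Gamma_val pt eb tlo thi f d \<and>
          (Pi_val pt eb tlo thi f d' > Pi_val pt eb tlo thi f d \<or>
           Gamma_val pt eb tlo thi f d' < Gamma_val pt eb tlo thi f d))"

definition argmax_E :: "(real \<Rightarrow> real \<Rightarrow> real \<Rightarrow> real) \<Rightarrow> real \<Rightarrow> real \<Rightarrow> real set" where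
  "argmax_E pt eb \<theta> = {e \<in> {0..eb}. \<forall>e'\<in>{0..eb}. red_profit pt \<theta> e' \<le> red_profit pt \<theta> e}"

definition full_disclosure ::
  "(real \<Rightarrow> real \<Rightarrow> real \<Rightarrow> real) \<Rightarrow> real \<Rightarrow> real \<Rightarrow> real \<Rightarrow> (real \<Rightarrow> real) \<Rightarrow> bool" where
  "full_disclosure pt eb tlo thi d \<longleftrightarrow> (\<forall>e\<in>{0..eb}. d e \<in> {0..eb}) \<and>
     (\<forall>\<theta>\<in>{tlo..thi}. \<forall>e\<in>argmax_E pt eb \<theta>. \<forall>e'\<in>{0..eb}. d e' = d e \<longrightarrow> e' = e)"

end

theory Submission
  imports Defs
begin

text \<open>Under full disclosure each type's unconstrained optimum \<open>\<hat>e(\<theta>)\<close> is belief-compatible,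
  so \<open>\<pi>\<^sub>d(\<theta>)\<close> is the global maximum of \<open>\<pi>(\<theta>, \<cdot>)\<close> and \<open>\<Pi>(d)\<close> is maximal.  If another
  policy \<open>d'\<close> attains the same \<open>\<Pi>\<close>, the continuous nonnegative gap \<open>(\<pi>\<^sub>d - \<pi>\<^sub>d\<^sub>') f\<close> integrates
  to zero and hence vanishes; so wherever \<open>f > 0\<close> the policy \<open>d'\<close> also attains the global
  maximum, whose maximizer is unique by strict concavity.  Thus \<open>\<gamma>\<^sub>d\<^sub>' = \<gamma>\<^sub>d = \<hat>e\<close> there,
  \<open>\<Gamma>(d') = \<Gamma>(d)\<close>, and no Pareto improvement exists.\<close>

lemma continuous_on_SUP_attained:
  fixes g :: "'a::metric_space \<Rightarrow> 'b::metric_space \<Rightarrow> real"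
  assumes uc: "uniformly_continuous_on (S \<times> E) (\<lambda>(x, e). g x e)"
    and "B \<subseteq> E"
    and attained: "\<forall>x\<in>S. \<exists>e\<in>B. \<forall>e'\<in>B. g x e' \<le> g x e"
  shows "continuous_on S (\<lambda>x. SUP e\<in>B. g x e)"
  unfolding continuous_on_iff
proof (intro ballI allI impI)
  fix x and \<epsilon> :: real assume x: "x \<in> S" and "0 < \<epsilon>"
  then obtain \<delta> where "\<delta> > 0" and \<delta>: "\<forall>p\<in>S \<times> E. \<forall>q\<in>S \<times> E. dist q p < \<delta> \<longrightarrow>
      dist ((\<lambda>(x, e). g x e) q) ((\<lambda>(x, e). g x e) p) < \<epsilon>"
    using uc unfolding uniformly_continuous_on_def by metis
  have SUP_eq: "(SUP e\<in>B. g y e) = g y e0" if "e0 \<in> B" "\<forall>e'\<in>B. g y e' \<le> g y e0" for y e0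
    using that by (intro cSup_eq_maximum) auto
  show "\<exists>\<delta>>0. \<forall>x'\<in>S. dist x' x < \<delta> \<longrightarrow> dist (SUP e\<in>B. g x' e) (SUP e\<in>B. g x e) < \<epsilon>"
  proof (intro exI[of _ \<delta>] conjI ballI impI \<open>\<delta> > 0\<close>)
    fix x' assume x': "x' \<in> S" and "dist x' x < \<delta>"
    obtain e1 where e1: "e1 \<in> B" "\<forall>e'\<in>B. g x e' \<le> g x e1" using attained x by blast
    obtain e2 where e2: "e2 \<in> B" "\<forall>e'\<in>B. g x' e' \<le> g x' e2" using attained x' by blast
    have close: "\<bar>g x' e - g x e\<bar> < \<epsilon>" if "e \<in> B" for e
    proof -
      have "dist (x', e) (x, e) < \<delta>" using \<open>dist x' x < \<delta>\<close> by (simp add: dist_Pair_Pair)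
      then show ?thesis using \<delta> x x' that \<open>B \<subseteq> E\<close> by (auto simp: dist_real_def)
    qed
    have "\<bar>g x' e2 - g x e1\<bar> < \<epsilon>"
      using close[OF e1(1)] close[OF e2(1)] e1(2)[rule_format, OF e2(1)] e2(2)[rule_format, OF e1(1)]
      by linarith
    then show "dist (SUP e\<in>B. g x' e) (SUP e\<in>B. g x e) < \<epsilon>"
      using SUP_eq[OF e1] SUP_eq[OF e2] by (simp add: dist_real_def)
  qed
qed

lemma strictly_concave_on_max_unique:
  assumes conc: "strictly_concave_on S g"
    and "x \<in> S" "\<forall>z\<in>S. g z \<le> g x"
    and "y \<in> S" "\<forall>z\<in>S. g z \<le> g y"
  shows "x = y"
proof (rule ccontr)
  assume "x \<noteq> y"
  let ?m = "(1 - 1/2) * x + (1/2) * y"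
  have "?m \<in> S"
    using conc convexD[of S x y "1 - 1/2" "1/2"] \<open>x \<in> S\<close> \<open>y \<in> S\<close>
    unfolding strictly_concave_on_def by simp
  moreover have "g ?m > (1 - 1/2) * g x + (1/2) * g y"
    using conc[unfolded strictly_concave_on_def, THEN conjunct2, rule_format, of x y "1/2"]
      \<open>x \<in> S\<close> \<open>y \<in> S\<close> \<open>x \<noteq> y\<close> by simp
  ultimately show False
    using assms(3,5) by fastforce
qed

lemma continuous_le_integral_eq_imp_eq:
  fixes g h :: "real \<Rightarrow> real"
  assumes "a < b" "continuous_on {a..b} g" "continuous_on {a..b} h"
    and le: "\<forall>x\<in>{a..b}. g x \<le> h x"
    and "integral {a..b} g = integral {a..b} h"
    and "x \<in> {a..b}"
  shows "g x = h x"
proof -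
  have g_int: "(g has_integral integral {a..b} g) {a..b}"
    and h_int: "(h has_integral integral {a..b} h) {a..b}"
    using assms(2,3) by (simp_all add: integrable_continuous_interval integrable_integral)
  have "((\<lambda>x. h x - g x) has_integral 0) (cbox a b)"
    using has_integral_diff[OF h_int g_int] assms(5) by simp
  then have "h x - g x = 0"
  proof (rule has_integral_0_cbox_imp_0[rotated 2])
    show "continuous_on (cbox a b) (\<lambda>x. h x - g x)"
      using assms(2,3) by (simp add: continuous_on_diff)
    show "0 \<le> h y - g y" if "y \<in> box a b" for y
      using le that by simp
  qed (use assms(1,6) in simp_all)
  then show ?thesis by simp
qed

lemma belief_compatible_subset: "belief_compatible eb d \<subseteq> {0..eb}"
  unfolding belief_compatible_def by blast

lemma pi_d_attained:
  assumes "d \<in> policies pt eb tlo thi" "\<theta> \<in> {tlo..thi}"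
  obtains e where "e \<in> belief_compatible eb d"
    and "\<forall>e'\<in>belief_compatible eb d. red_profit pt \<theta> e' \<le> red_profit pt \<theta> e"
    and "pi_d pt eb d \<theta> = red_profit pt \<theta> e"
proof -
  obtain e where e: "e \<in> belief_compatible eb d"
      "\<forall>e'\<in>belief_compatible eb d. red_profit pt \<theta> e' \<le> red_profit pt \<theta> e"
    using assms unfolding policies_def by blast
  moreover have "pi_d pt eb d \<theta> = red_profit pt \<theta> e"
    unfolding pi_d_def using e by (intro cSup_eq_maximum) auto
  ultimately show thesis by (rule that)
qed

definition ehat :: "(real \<Rightarrow> real \<Rightarrow> real \<Rightarrow> real) \<Rightarrow> real \<Rightarrow> real \<Rightarrow> real" where
  "ehat pt eb \<theta> = (THE e. e \<in> argmax_E pt eb \<theta>)"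

locale disclosure_model =
  fixes pt :: "real \<Rightarrow> real \<Rightarrow> real \<Rightarrow> real" and eb tlo thi :: real and f :: "real \<Rightarrow> real"
  assumes model: "model_assms pt eb tlo thi f"
begin

lemma density_nonneg: "\<theta> \<in> {tlo..thi} \<Longrightarrow> 0 \<le> f \<theta>"
  using model unfolding model_assms_def by blast

lemma continuous_on_density: "continuous_on {tlo..thi} f"
  using model unfolding model_assms_def by blast

lemma continuous_on_red_profit:
  "continuous_on ({tlo..thi} \<times> {0..eb}) (\<lambda>(\<theta>, e). red_profit pt \<theta> e)"
proof -
  have "continuous_on ({tlo..thi} \<times> {0..eb} \<times> {0..eb}) (\<lambda>(\<theta>, e, et). pt \<theta> e et)"
    using model unfolding model_assms_def by blast
  then have "continuous_on ({tlo..thi} \<times> {0..eb})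
      (\<lambda>p. (\<lambda>(\<theta>, e, et). pt \<theta> e et) ((\<lambda>(\<theta>, e). (\<theta>, e, e)) p))"
    by (rule continuous_on_compose2)
      (auto simp: case_prod_beta' intro!: continuous_intros)
  then show ?thesis by (simp add: red_profit_def case_prod_beta')
qed

lemma argmax_E_eq_ehat:
  assumes "\<theta> \<in> {tlo..thi}"
  shows "argmax_E pt eb \<theta> = {ehat pt eb \<theta>}"
proof -
  have "continuous_on {0..eb} (\<lambda>e. (\<lambda>(\<theta>, e). red_profit pt \<theta> e) (\<theta>, e))"
    by (rule continuous_on_compose2[OF continuous_on_red_profit])
      (use assms in \<open>auto intro!: continuous_intros\<close>)
  moreover have "0 < eb" using model unfolding model_assms_def by blast
  ultimately obtain e where e: "e \<in> argmax_E pt eb \<theta>"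
    using continuous_attains_sup[of "{0..eb}" "red_profit pt \<theta>"] unfolding argmax_E_def by auto
  have "strictly_concave_on {0..eb} (red_profit pt \<theta>)"
    using model assms unfolding model_assms_def red_profit_def[abs_def] by blast
  then have unique: "e' = e" if "e' \<in> argmax_E pt eb \<theta>" for e'
    using strictly_concave_on_max_unique that e unfolding argmax_E_def by blast
  then have "ehat pt eb \<theta> = e"
    unfolding ehat_def using e by blast
  then show ?thesis using e unique by blast
qed

lemma red_profit_le_ehat:
  "\<theta> \<in> {tlo..thi} \<Longrightarrow> e \<in> {0..eb} \<Longrightarrow> red_profit pt \<theta> e \<le> red_profit pt \<theta> (ehat pt eb \<theta>)"
  using argmax_E_eq_ehat unfolding argmax_E_def by blast

lemma ge_red_profit_ehat_imp_eq:
  assumes "\<theta> \<in> {tlo..thi}" "e \<in> {0..eb}" "red_profit pt \<theta> (ehat pt eb \<theta>) \<le> red_profit pt \<theta> e"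
  shows "e = ehat pt eb \<theta>"
proof -
  have "e \<in> argmax_E pt eb \<theta>"
    using assms red_profit_le_ehat[OF assms(1)] unfolding argmax_E_def by force
  then show ?thesis using argmax_E_eq_ehat[OF assms(1)] by blast
qed

lemma pi_d_le_ehat:
  assumes "d \<in> policies pt eb tlo thi" "\<theta> \<in> {tlo..thi}"
  shows "pi_d pt eb d \<theta> \<le> red_profit pt \<theta> (ehat pt eb \<theta>)"
  using assms belief_compatible_subset red_profit_le_ehat
  by (metis pi_d_attained subsetD)

lemma gamma_d_eq_ehat:
  assumes d: "d \<in> policies pt eb tlo thi" and \<theta>: "\<theta> \<in> {tlo..thi}"
    and pi_max: "pi_d pt eb d \<theta> = red_profit pt \<theta> (ehat pt eb \<theta>)"
  shows "gamma_d pt eb d \<theta> = ehat pt eb \<theta>"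
proof -
  let ?B = "belief_compatible eb d"
  let ?maximizer = "\<lambda>e. e \<in> ?B \<and> (\<forall>e'\<in>?B. red_profit pt \<theta> e' \<le> red_profit pt \<theta> e)"
  obtain e0 where e0: "?maximizer e0" and pi_e0: "pi_d pt eb d \<theta> = red_profit pt \<theta> e0"
    using pi_d_attained[OF d \<theta>] by metis
  have only_ehat: "e = ehat pt eb \<theta>" if "?maximizer e" for e
  proof (rule ge_red_profit_ehat_imp_eq[OF \<theta>])
    show "e \<in> {0..eb}"
      using that belief_compatible_subset by blast
    show "red_profit pt \<theta> (ehat pt eb \<theta>) \<le> red_profit pt \<theta> e"
      using that e0 pi_e0 pi_max by simp
  qed
  then have "e0 = ehat pt eb \<theta>"
    using e0 by blast
  then have "?maximizer (ehat pt eb \<theta>)"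
    using e0 by simp
  then show ?thesis
    unfolding gamma_d_def
  proof (rule Least_equality)
    show "ehat pt eb \<theta> \<le> y" if "?maximizer y" for y
      using only_ehat[OF that] by simp
  qed
qed

lemma continuous_on_pi_d:
  assumes "d \<in> policies pt eb tlo thi"
  shows "continuous_on {tlo..thi} (pi_d pt eb d)"
proof -
  have "uniformly_continuous_on ({tlo..thi} \<times> {0..eb}) (\<lambda>(\<theta>, e). red_profit pt \<theta> e)"
    by (intro compact_uniformly_continuous continuous_on_red_profit compact_Times compact_Icc)
  then show ?thesis
    unfolding pi_d_def[abs_def]
    using belief_compatible_subset assms unfolding policies_def
    by (intro continuous_on_SUP_attained) auto
qed

lemma continuous_on_pi_d_density:
  "d \<in> policies pt eb tlo thi \<Longrightarrow> continuous_on {tlo..thi} (\<lambda>\<theta>. pi_d pt eb d \<theta> * f \<theta>)"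
  by (intro continuous_on_mult continuous_on_pi_d continuous_on_density)

context
  fixes d assumes full: "full_disclosure pt eb tlo thi d"
begin

lemma full_disclosure_ehat_belief_compatible:
  assumes "\<theta> \<in> {tlo..thi}"
  shows "ehat pt eb \<theta> \<in> belief_compatible eb d"
proof -
  have ehat: "ehat pt eb \<theta> \<in> argmax_E pt eb \<theta>"
    using argmax_E_eq_ehat[OF assms] by blast
  have "e' \<le> ehat pt eb \<theta>" if "e' \<in> {0..eb}" "d e' = d (ehat pt eb \<theta>)" for e'
  proof -
    have "e' = ehat pt eb \<theta>"
      using full assms ehat that unfolding full_disclosure_def by blast
    then show ?thesis by simp
  qed
  moreover have "ehat pt eb \<theta> \<in> {0..eb}"
    using ehat unfolding argmax_E_def by blast
  ultimately show ?thesis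
    unfolding belief_compatible_def by simp
qed

lemma full_disclosure_in_policies: "d \<in> policies pt eb tlo thi"
  unfolding policies_def
proof (intro CollectI conjI ballI)
  show "d e \<in> {0..eb}" if "e \<in> {0..eb}" for e
    using full that unfolding full_disclosure_def by blast
  fix \<theta> assume \<theta>: "\<theta> \<in> {tlo..thi}"
  show "\<exists>e\<in>belief_compatible eb d. \<forall>e'\<in>belief_compatible eb d.
      red_profit pt \<theta> e' \<le> red_profit pt \<theta> e"
    using full_disclosure_ehat_belief_compatible[OF \<theta>] red_profit_le_ehat[OF \<theta>]
      belief_compatible_subset[of eb d] by blast
qed

lemma full_disclosure_pi_d:
  assumes "\<theta> \<in> {tlo..thi}"
  shows "pi_d pt eb d \<theta> = red_profit pt \<theta> (ehat pt eb \<theta>)"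
proof (rule antisym)
  show "pi_d pt eb d \<theta> \<le> red_profit pt \<theta> (ehat pt eb \<theta>)"
    using pi_d_le_ehat[OF full_disclosure_in_policies assms] .
  obtain e where "e \<in> belief_compatible eb d"
      and "\<forall>e'\<in>belief_compatible eb d. red_profit pt \<theta> e' \<le> red_profit pt \<theta> e"
      and "pi_d pt eb d \<theta> = red_profit pt \<theta> e"
    by (rule pi_d_attained[OF full_disclosure_in_policies assms])
  then show "red_profit pt \<theta> (ehat pt eb \<theta>) \<le> pi_d pt eb d \<theta>"
    using full_disclosure_ehat_belief_compatible[OF assms] by simp
qed

lemma full_disclosure_gamma_d:
  assumes "\<theta> \<in> {tlo..thi}"
  shows "gamma_d pt eb d \<theta> = ehat pt eb \<theta>"
  by (rule gamma_d_eq_ehat[OF full_disclosure_in_policies assms full_disclosure_pi_d[OF assms]])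

lemma full_disclosure_pi_d_density_ge:
  assumes "d' \<in> policies pt eb tlo thi" "\<theta> \<in> {tlo..thi}"
  shows "pi_d pt eb d' \<theta> * f \<theta> \<le> pi_d pt eb d \<theta> * f \<theta>"
  using mult_right_mono[OF pi_d_le_ehat[OF assms] density_nonneg[OF assms(2)]]
  by (simp add: full_disclosure_pi_d[OF assms(2)])

lemma full_disclosure_Pi_val_ge:
  assumes "d' \<in> policies pt eb tlo thi"
  shows "Pi_val pt eb tlo thi f d' \<le> Pi_val pt eb tlo thi f d"
  unfolding Pi_val_def
  using assms full_disclosure_in_policies full_disclosure_pi_d_density_ge
  by (intro integral_le integrable_continuous_interval continuous_on_pi_d_density)

lemma full_disclosure_Gamma_val_eq:
  assumes d': "d' \<in> policies pt eb tlo thi"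
    and Pi_eq: "Pi_val pt eb tlo thi f d' = Pi_val pt eb tlo thi f d"
  shows "Gamma_val pt eb tlo thi f d' = Gamma_val pt eb tlo thi f d"
  unfolding Gamma_val_def
proof (rule integral_cong)
  fix \<theta> assume \<theta>: "\<theta> \<in> {tlo..thi}"
  have "pi_d pt eb d' \<theta> * f \<theta> = pi_d pt eb d \<theta> * f \<theta>"
  proof (rule continuous_le_integral_eq_imp_eq[OF _ _ _ _ _ \<theta>])
    show "tlo < thi"
      using model unfolding model_assms_def by blast
    show "continuous_on {tlo..thi} (\<lambda>\<theta>. pi_d pt eb d' \<theta> * f \<theta>)"
      "continuous_on {tlo..thi} (\<lambda>\<theta>. pi_d pt eb d \<theta> * f \<theta>)"
      using continuous_on_pi_d_density d' full_disclosure_in_policies by blast+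
    show "\<forall>\<theta>\<in>{tlo..thi}. pi_d pt eb d' \<theta> * f \<theta> \<le> pi_d pt eb d \<theta> * f \<theta>"
      using full_disclosure_pi_d_density_ge[OF d'] by blast
    show "integral {tlo..thi} (\<lambda>\<theta>. pi_d pt eb d' \<theta> * f \<theta>)
        = integral {tlo..thi} (\<lambda>\<theta>. pi_d pt eb d \<theta> * f \<theta>)"
      using Pi_eq unfolding Pi_val_def .
  qed
  then have "f \<theta> = 0 \<or> gamma_d pt eb d' \<theta> = ehat pt eb \<theta>"
    using gamma_d_eq_ehat[OF d' \<theta>] full_disclosure_pi_d[OF \<theta>] by auto
  then show "gamma_d pt eb d' \<theta> * f \<theta> = gamma_d pt eb d \<theta> * f \<theta>"
    using full_disclosure_gamma_d[OF \<theta>] by auto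
qed

end

end

theorem proposition3:
  fixes pt :: "real \<Rightarrow> real \<Rightarrow> real \<Rightarrow> real" and eb tlo thi :: real
    and f d :: "real \<Rightarrow> real"
  assumes "model_assms pt eb tlo thi f"
    and "full_disclosure pt eb tlo thi d"
  shows "pareto_efficient pt eb tlo thi f d \<and>
         (\<forall>d'\<in>policies pt eb tlo thi. Pi_val pt eb tlo thi f d \<ge> Pi_val pt eb tlo thi f d')"
proof -
  interpret disclosure_model pt eb tlo thi f
    using assms(1) by unfold_locales
  have Pi_max: "Pi_val pt eb tlo thi f d' \<le> Pi_val pt eb tlo thi f d"
    if "d' \<in> policies pt eb tlo thi" for d'
    using full_disclosure_Pi_val_ge[OF assms(2) that] .
  have no_improvement: "\<not> (Pi_val pt eb tlo thi f d' \<ge> Pi_val pt eb tlo thi f d \<and>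
        Gamma_val pt eb tlo thi f d' \<le> Gamma_val pt eb tlo thi f d \<and>
        (Pi_val pt eb tlo thi f d' > Pi_val pt eb tlo thi f d \<or>
         Gamma_val pt eb tlo thi f d' < Gamma_val pt eb tlo thi f d))"
    if "d' \<in> policies pt eb tlo thi" for d'
  proof (cases "Pi_val pt eb tlo thi f d' = Pi_val pt eb tlo thi f d")
    case True
    then show ?thesis using full_disclosure_Gamma_val_eq[OF assms(2) that] by simp
  next
    case False
    then show ?thesis using Pi_max[OF that] by simp
  qed
  show ?thesis
    unfolding pareto_efficient_def
    using full_disclosure_in_policies[OF assms(2)] Pi_max no_improvement by blast
qed

end
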